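(* Let $X$ be a nontrivial real Hausdorff locally convex space and $f\in\Gamma(X)$. Then (a) $f$ is directionally coercive if and only if $0\in\operatorname{qi}\overline{\operatorname{dom}f^{\ast}}$; (b) $f$ is essentially directionally coercive if and only if $\operatorname{qi}\overline{\operatorname{dom}f^{\ast}}\neq\emptyset$.
   Context: $X^{\ast}$ is the topological dual of $X$ endowed with the weak$^{\ast}$ topology (so $\overline{\operatorname{dom}f^{\ast}}$ is the weak$^{\ast}$ closure); $\langle x,x^{\ast}\rangle=x^{\ast}(x)$. $\Gamma(X)$: proper lower semicontinuous convex functions; $f^{\ast}(x^{\ast})=\sup_x(\langle x,x^{\ast}\rangle-f(x))$, $\operatorname{dom}f^{\ast}=\{f^{\ast}<\infty\}$. For convex $B\subset X^{\ast}$, $\operatorname{qi}B=\{b\in B:\text{weak}^{\ast}\text{ closure of }\mathbb{R}_+(B-b)=X^{\ast}\}$. $f$ is directionally coercive if $\lim_{t\to\infty}f(x+tu)=\infty$ for all $x\in X$, $u\in X\setminus\{0\}$; essentially directionally coercive if $f-x^{\ast}$ is directionally coercive for some $x^{\ast}\in X^{\ast}$. *)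

theory Defs
  imports "HOL-Analysis.Analysis"
begin

text \<open>Hausdorffness is the class t2_space.\<close>
definition locally_convex_tvs :: "('a::{real_vector,topological_space}) itself \<Rightarrow> bool" where
  "locally_convex_tvs _ \<longleftrightarrow>
     continuous_on UNIV (\<lambda>p::'a \<times> 'a. fst p + snd p) \<and>
     continuous_on UNIV (\<lambda>p::real \<times> 'a. fst p *\<^sub>R snd p) \<and>
     (\<forall>U::'a set. open U \<and> 0 \<in> U \<longrightarrow> (\<exists>V. open V \<and> convex V \<and> 0 \<in> V \<and> V \<subseteq> U))"

definition topdual :: "('a::{real_vector,topological_space} \<Rightarrow> real) set" where
  "topdual = {\<phi>. linear \<phi> \<and> continuous_on UNIV \<phi>}"

definition wstar_closure :: "('a::{real_vector,topological_space} \<Rightarrow> real) set \<Rightarrow> ('a \<Rightarrow> real) set" where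
  "wstar_closure B = {\<phi> \<in> topdual. \<forall>F e. finite F \<and> e > 0 \<longrightarrow>
       (\<exists>b\<in>B. \<forall>x\<in>F. \<bar>b x - \<phi> x\<bar> < e)}"

definition qi :: "('a::{real_vector,topological_space} \<Rightarrow> real) set \<Rightarrow> ('a \<Rightarrow> real) set" where
  "qi B = {b \<in> B. wstar_closure {(\<lambda>x. t * (c x - b x)) | t c. t \<ge> 0 \<and> c \<in> B} = topdual}"

definition GammaX :: "('a::{real_vector,topological_space} \<Rightarrow> ereal) set" where
  "GammaX = {f. (\<forall>x. f x \<noteq> -\<infinity>) \<and> (\<exists>x. f x \<noteq> \<infinity>)
       \<and> (\<forall>c::real. closed {x. f x \<le> ereal c})
       \<and> (\<forall>x y. \<forall>t::real. 0 \<le> t \<and> t \<le> 1 \<longrightarrow>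
              f ((1 - t) *\<^sub>R x + t *\<^sub>R y) \<le> ereal (1 - t) * f x + ereal t * f y)}"

definition fconj :: "('a::{real_vector,topological_space} \<Rightarrow> ereal) \<Rightarrow> ('a \<Rightarrow> real) \<Rightarrow> ereal" where
  "fconj f \<phi> = (SUP x. ereal (\<phi> x) - f x)"

definition dom_conj :: "('a::{real_vector,topological_space} \<Rightarrow> ereal) \<Rightarrow> ('a \<Rightarrow> real) set" where
  "dom_conj f = {\<phi> \<in> topdual. fconj f \<phi> < \<infinity>}"

definition dir_coercive :: "('a::{real_vector,topological_space} \<Rightarrow> ereal) \<Rightarrow> bool" where
  "dir_coercive f \<longleftrightarrow> (\<forall>x u. u \<noteq> 0 \<longrightarrow> ((\<lambda>t::real. f (x + t *\<^sub>R u)) \<longlongrightarrow> \<infinity>) at_top)"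

definition ess_dir_coercive :: "('a::{real_vector,topological_space} \<Rightarrow> ereal) \<Rightarrow> bool" where
  "ess_dir_coercive f \<longleftrightarrow> (\<exists>\<phi>\<in>topdual. dir_coercive (\<lambda>x. f x - ereal (\<phi> x)))"

end

theory Submission
  imports Defs "HOL-Library.Function_Algebras"
begin

text \<open>Both parts rest on one characterisation: for \<open>\<phi> \<in> X*\<close>, the function \<open>f - \<phi>\<close> is directionally
  coercive iff for every direction \<open>u \<noteq> 0\<close> some \<open>\<psi> \<in> dom f*\<close> satisfies \<open>\<phi> u < \<psi> u\<close>.
  Such a \<open>\<psi>\<close> gives \<open>f \<ge> \<psi> - c\<close>, hence linear growth of \<open>f - \<phi>\<close> along \<open>u\<close>. Conversely \<open>f\<close> is the
  supremum of its continuous affine minorants (separate a point below the graph from the closed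
  convex epigraph), so unbounded growth of \<open>f - \<phi>\<close> along \<open>u\<close> forces the slope of some minorant
  to exceed \<open>\<phi>\<close> at \<open>u\<close>.

  The same directional condition characterises \<open>\<phi> \<in> qi\<close> of the weak* closure of the convex set
  \<open>dom f*\<close>: a basic weak* neighbourhood only involves finitely many points, so a finite-dimensional
  separation turns any weak* neighbourhood missing \<open>dom f*\<close>, or missing the cone it generates at
  \<open>\<phi>\<close>, into a direction violating the condition; the converse uses that \<open>X*\<close> separates the
  points of the Hausdorff space \<open>X\<close>. All separation arguments go through a Hahn-Banach theorem
  obtained from a minimal sublinear functional by Zorn's lemma.\<close>

section \<open>Sublinear functionals and the Hahn-Banach theorem\<close>

definition sublinear :: "('v::real_vector \<Rightarrow> real) \<Rightarrow> bool" where
  "sublinear p \<longleftrightarrow> (\<forall>x y. p (x + y) \<le> p x + p y) \<and> (\<forall>t>0. \<forall>x. p (t *\<^sub>R x) \<le> t * p x)"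

lemma sublinear_add: "sublinear p \<Longrightarrow> p (x + y) \<le> p x + p y"
  by (simp add: sublinear_def)

lemma sublinear_scaleR_le: "sublinear p \<Longrightarrow> t > 0 \<Longrightarrow> p (t *\<^sub>R x) \<le> t * p x"
  by (simp add: sublinear_def)

lemma sublinear_zero: "sublinear p \<Longrightarrow> p 0 = 0"
  using sublinear_scaleR_le[of p 2 0] sublinear_scaleR_le[of p "1/2" 0] by simp

lemma sublinear_minus: "sublinear p \<Longrightarrow> - p (- x) \<le> p x"
  using sublinear_add[of p x "-x"] sublinear_zero[of p] by simp

lemma sublinear_scaleR:
  assumes p: "sublinear p" and t: "t \<ge> 0"
  shows "p (t *\<^sub>R x) = t * p x"
proof (cases "t = 0")
  case True
  then show ?thesis using sublinear_zero[OF p] by simp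
next
  case False
  with t have "t > 0" by simp
  have "p x \<le> (1/t) * p (t *\<^sub>R x)"
    using sublinear_scaleR_le[OF p, of "1/t" "t *\<^sub>R x"] \<open>t > 0\<close> by simp
  then show ?thesis
    using sublinear_scaleR_le[OF p \<open>t > 0\<close>, of x] \<open>t > 0\<close> by (simp add: field_simps)
qed

lemma sublinear_linearI:
  assumes p: "sublinear p" and minus: "\<And>x. p (- x) \<le> - p x"
  shows "linear p"
proof -
  have neg: "p (- x) = - p x" for x
    using minus[of x] sublinear_minus[OF p, of x] by simp
  show ?thesis
  proof (rule linearI)
    show "p (x + y) = p x + p y" for x y
      using sublinear_add[OF p, of x y] sublinear_add[OF p, of "-x" "-y"] neg[of "x + y"] neg[of x] neg[of y]
      by (simp add: add.commute)
    show "p (c *\<^sub>R x) = c *\<^sub>R p x" for c x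
    proof (cases "c \<ge> 0")
      case True
      then show ?thesis using sublinear_scaleR[OF p] by simp
    next
      case False
      then have "p ((- c) *\<^sub>R (- x)) = (- c) * p (- x)" by (intro sublinear_scaleR[OF p]) simp
      then show ?thesis using neg[of x] by simp
    qed
  qed
qed

definition ray_inf :: "('v::real_vector \<Rightarrow> real) \<Rightarrow> 'v \<Rightarrow> real \<Rightarrow> 'v \<Rightarrow> real" where
  "ray_inf p a k x = (INF t\<in>{0..}. p (x + t *\<^sub>R a) - t * k)"

lemma ray_inf_le:
  assumes p: "sublinear p" and k: "k \<le> p a" and t: "t \<ge> 0"
  shows "ray_inf p a k x \<le> p (x + t *\<^sub>R a) - t * k"
proof -
  have "- p (- x) \<le> p (x + s *\<^sub>R a) - s * k" if "s \<ge> 0" for s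
  proof -
    have "s * p a = p (s *\<^sub>R a)" using sublinear_scaleR[OF p that] by simp
    also have "\<dots> \<le> p (x + s *\<^sub>R a) + p (- x)"
      using sublinear_add[OF p, of "x + s *\<^sub>R a" "- x"] by simp
    finally show ?thesis using mult_left_mono[OF k that] by linarith
  qed
  then have "bdd_below ((\<lambda>s. p (x + s *\<^sub>R a) - s * k) ` {0..})"
    by (auto intro!: bdd_belowI2)
  then show ?thesis unfolding ray_inf_def using t by (intro cINF_lower) auto
qed

lemma ray_inf_greatest:
  "(\<And>t. t \<ge> 0 \<Longrightarrow> c \<le> p (x + t *\<^sub>R a) - t * k) \<Longrightarrow> c \<le> ray_inf p a k x"
  unfolding ray_inf_def by (intro cINF_greatest) auto

lemma ray_inf_below: "sublinear p \<Longrightarrow> k \<le> p a \<Longrightarrow> ray_inf p a k x \<le> p x"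
  using ray_inf_le[of p k a 0 x] by simp

lemma ray_inf_minus: "sublinear p \<Longrightarrow> k \<le> p a \<Longrightarrow> ray_inf p a k (- a) \<le> - k"
  using ray_inf_le[of p k a 1 "- a"] sublinear_zero[of p] by simp

lemma sublinear_ray_inf:
  assumes p: "sublinear p" and k: "k \<le> p a"
  shows "sublinear (ray_inf p a k)"
  unfolding sublinear_def
proof (intro conjI allI impI)
  let ?q = "ray_inf p a k"
  fix x y
  have "?q (x + y) - (p (y + t *\<^sub>R a) - t * k) \<le> ?q x" if t: "t \<ge> 0" for t
  proof (rule ray_inf_greatest)
    fix s :: real assume s: "s \<ge> 0"
    have "?q (x + y) \<le> p ((x + s *\<^sub>R a) + (y + t *\<^sub>R a)) - (s + t) * k"
      using ray_inf_le[OF p k, of "s + t" "x + y"] s t by (simp add: algebra_simps)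
    also have "\<dots> \<le> p (x + s *\<^sub>R a) + p (y + t *\<^sub>R a) - (s + t) * k"
      using sublinear_add[OF p] by simp
    finally show "?q (x + y) - (p (y + t *\<^sub>R a) - t * k) \<le> p (x + s *\<^sub>R a) - s * k"
      by (simp add: algebra_simps)
  qed
  then have "?q (x + y) - ?q x \<le> ?q y"
    by (intro ray_inf_greatest) (simp add: algebra_simps)
  then show "?q (x + y) \<le> ?q x + ?q y" by simp
next
  let ?q = "ray_inf p a k"
  fix t :: real and x assume t: "t > 0"
  have "?q (t *\<^sub>R x) / t \<le> ?q x"
  proof (rule ray_inf_greatest)
    fix s :: real assume s: "s \<ge> 0"
    have "?q (t *\<^sub>R x) \<le> p (t *\<^sub>R (x + s *\<^sub>R a)) - (t * s) * k"
      using ray_inf_le[OF p k, of "t * s" "t *\<^sub>R x"] s t by (simp add: scaleR_add_right)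
    also have "\<dots> \<le> t * p (x + s *\<^sub>R a) - (t * s) * k"
      using sublinear_scaleR_le[OF p t] by simp
    finally show "?q (t *\<^sub>R x) / t \<le> p (x + s *\<^sub>R a) - s * k"
      using t by (simp add: field_simps)
  qed
  then show "?q (t *\<^sub>R x) \<le> t * ?q x" using t by (simp add: field_simps)
qed

lemma sublinear_chain_Inf:
  assumes C: "C \<noteq> {}" "\<And>q. q \<in> C \<Longrightarrow> sublinear q \<and> q \<le> p"
    and chain: "\<And>q1 q2. q1 \<in> C \<Longrightarrow> q2 \<in> C \<Longrightarrow> q1 \<le> q2 \<or> q2 \<le> q1"
  shows "sublinear (\<lambda>x. INF q\<in>C. q x)" "\<And>q. q \<in> C \<Longrightarrow> (\<lambda>x. INF q\<in>C. q x) \<le> q"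
proof -
  define u where "u x = (INF q\<in>C. q x)" for x
  have bdd: "bdd_below ((\<lambda>q. q x) ` C)" for x
  proof (rule bdd_belowI2)
    fix q assume "q \<in> C"
    then have "- p (- x) \<le> - q (- x)" "- q (- x) \<le> q x"
      using C(2) sublinear_minus by (auto simp: le_fun_def)
    then show "- p (- x) \<le> q x" by linarith
  qed
  have u_le: "u x \<le> q x" if "q \<in> C" for q x
    unfolding u_def using bdd that by (rule cINF_lower)
  have u_greatest: "c \<le> u x" if "\<And>q. q \<in> C \<Longrightarrow> c \<le> q x" for c x
    unfolding u_def using C(1) that by (intro cINF_greatest) auto
  show "(\<lambda>x. INF q\<in>C. q x) \<le> q" if "q \<in> C" for q
    using u_le[OF that] by (simp add: le_fun_def u_def)
  show "sublinear (\<lambda>x. INF q\<in>C. q x)"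
    unfolding u_def[symmetric] sublinear_def
  proof (intro conjI allI impI)
    fix x y
    have "u (x + y) - q2 y \<le> q1 x" if q12: "q1 \<in> C" "q2 \<in> C" for q1 q2
    proof -
      obtain q where q: "q \<in> C" "q \<le> q1" "q \<le> q2"
        using chain[OF q12] q12 by blast
      then have "q (x + y) \<le> q x + q y" using C(2) sublinear_add by blast
      moreover have "q x \<le> q1 x" "q y \<le> q2 y" using q(2,3) by (auto simp: le_fun_def)
      ultimately show ?thesis using u_le[OF q(1), of "x + y"] by linarith
    qed
    then have "u (x + y) - q2 y \<le> u x" if "q2 \<in> C" for q2
      using that by (intro u_greatest) auto
    then have "u (x + y) - u x \<le> u y" by (intro u_greatest) force
    then show "u (x + y) \<le> u x + u y" by simp
  next
    fix t :: real and x assume t: "t > 0"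
    have "u (t *\<^sub>R x) / t \<le> u x"
    proof (rule u_greatest)
      fix q assume "q \<in> C"
      then have "q (t *\<^sub>R x) \<le> t * q x" using C(2) sublinear_scaleR_le t by blast
      then show "u (t *\<^sub>R x) / t \<le> q x" using u_le[OF \<open>q \<in> C\<close>, of "t *\<^sub>R x"] t
        by (simp add: field_simps)
    qed
    then show "u (t *\<^sub>R x) \<le> t * u x" using t by (simp add: field_simps)
  qed
qed

lemma minimal_sublinear_linear:
  assumes m: "sublinear m" and minimal: "\<And>q. sublinear q \<Longrightarrow> q \<le> m \<Longrightarrow> q = m"
  shows "linear m"
proof (rule sublinear_linearI[OF m])
  fix x
  have "ray_inf m x (m x) = m"
    using minimal sublinear_ray_inf[OF m] ray_inf_below[OF m] by (simp add: le_fun_def)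
  then show "m (- x) \<le> - m x" using ray_inf_minus[OF m, of "m x" x] by simp
qed

theorem Hahn_Banach_sublinear:
  fixes p :: "'v::real_vector \<Rightarrow> real"
  assumes p: "sublinear p" and k: "k \<le> p a"
  shows "\<exists>g. linear g \<and> g \<le> p \<and> k \<le> g a"
proof -
  define S where "S = {q. sublinear q \<and> q \<le> p \<and> q (- a) \<le> - k}"
  have "ray_inf p a k \<in> S"
    unfolding S_def using sublinear_ray_inf ray_inf_below ray_inf_minus p k by (auto simp: le_fun_def)
  have po: "partial_order_on S (relation_of (\<lambda>q1 q2. q2 \<le> q1) S)"
    by (rule partial_order_on_relation_ofI) auto
  have "\<exists>u\<in>S. \<forall>q\<in>C. u \<le> q" if C: "C \<in> Chains (relation_of (\<lambda>q1 q2. q2 \<le> q1) S)" for C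
  proof (cases "C = {}")
    case True
    then show ?thesis using \<open>ray_inf p a k \<in> S\<close> by blast
  next
    case False
    have CS: "C \<subseteq> S" using Chains_relation_of[OF C] .
    have chain: "q1 \<le> q2 \<or> q2 \<le> q1" if "q1 \<in> C" "q2 \<in> C" for q1 q2
      using C that unfolding Chains_def relation_of_def by blast
    let ?u = "\<lambda>x. INF q\<in>C. q x"
    have u: "sublinear ?u" "\<And>q. q \<in> C \<Longrightarrow> ?u \<le> q"
      using sublinear_chain_Inf[OF False _ chain, of p] CS unfolding S_def by blast+
    obtain q where "q \<in> C" using False by blast
    then have "?u \<in> S" using u CS unfolding S_def by (auto simp: le_fun_def intro: order_trans)
    then show ?thesis using u(2) by blast
  qed
  then obtain m where m: "m \<in> S" and minimal: "\<And>q. q \<in> S \<Longrightarrow> q \<le> m \<Longrightarrow> q = m"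
    using predicate_Zorn[OF po] by blast
  have m_props: "sublinear m" "m \<le> p" "m (- a) \<le> - k" using m unfolding S_def by auto
  have "q = m" if "sublinear q" "q \<le> m" for q
    using minimal[OF _ that(2)] that m_props unfolding S_def by (auto simp: le_fun_def intro: order_trans)
  then have "linear m" using minimal_sublinear_linear[OF m_props(1)] by blast
  moreover have "k \<le> m a" using m_props(3) linear_neg[OF \<open>linear m\<close>, of a] by simp
  ultimately show ?thesis using m_props(2) by blast
qed

section \<open>Separation in real vector spaces\<close>

definition absorbing :: "'v::real_vector set \<Rightarrow> bool" where
  "absorbing D \<longleftrightarrow> (\<forall>z. \<exists>s>0. s *\<^sub>R z \<in> D)"

lemma absorbing_mono: "absorbing D \<Longrightarrow> D \<subseteq> E \<Longrightarrow> absorbing E"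
  unfolding absorbing_def by blast

lemma absorbing_zero: "absorbing D \<Longrightarrow> 0 \<in> D"
  unfolding absorbing_def by (metis scaleR_zero_right)

lemma convex_scaleR_mem:
  assumes "convex D" "0 \<in> D" "t *\<^sub>R z \<in> D" "0 \<le> s" "s \<le> t"
  shows "s *\<^sub>R z \<in> D"
proof (cases "t = 0")
  case True
  then show ?thesis using assms by simp
next
  case False
  then have "(s / t) *\<^sub>R (t *\<^sub>R z) + (1 - s / t) *\<^sub>R 0 \<in> D"
    using convexD[OF assms(1,3,2), of "s / t" "1 - s / t"] assms(4,5) by simp
  then show ?thesis using False by simp
qed

lemma absorbing_Times:
  assumes "convex A" "absorbing A" "convex B" "absorbing B"
  shows "absorbing (A \<times> B)"
  unfolding absorbing_def
proof
  fix z :: "'a \<times> 'b"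
  obtain s1 s2 where s: "s1 > 0" "s1 *\<^sub>R fst z \<in> A" "s2 > 0" "s2 *\<^sub>R snd z \<in> B"
    using assms(2,4) unfolding absorbing_def by meson
  have "min s1 s2 *\<^sub>R fst z \<in> A" "min s1 s2 *\<^sub>R snd z \<in> B"
    using convex_scaleR_mem[OF assms(1) absorbing_zero[OF assms(2)] s(2)]
      convex_scaleR_mem[OF assms(3) absorbing_zero[OF assms(4)] s(4)] s(1,3) by auto
  then show "\<exists>s>0. s *\<^sub>R z \<in> A \<times> B" using s(1,3) by (intro exI[of _ "min s1 s2"]) (auto simp: mem_Times_iff)
qed

lemma absorbing_ball: "e > 0 \<Longrightarrow> absorbing (ball (0::'a::real_normed_vector) e)"
  unfolding absorbing_def
proof
  fix z :: 'a assume "e > 0"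
  show "\<exists>s>0. s *\<^sub>R z \<in> ball 0 e"
  proof (cases "z = 0")
    case True
    then show ?thesis using \<open>e > 0\<close> by (intro exI[of _ 1]) auto
  next
    case False
    then show ?thesis using \<open>e > 0\<close> by (intro exI[of _ "e / (2 * norm z)"]) auto
  qed
qed

definition minkowski_functional :: "'v::real_vector set \<Rightarrow> 'v \<Rightarrow> real" where
  "minkowski_functional D z = Inf {t. t > 0 \<and> (1 / t) *\<^sub>R z \<in> D}"

context
  fixes D :: "'v::real_vector set"
  assumes convex: "convex D" and absorbing: "absorbing D"
begin

private abbreviation "scales z \<equiv> {t. t > 0 \<and> (1 / t) *\<^sub>R z \<in> D}"

private lemma scales_nonempty: "scales z \<noteq> {}"
proof -
  obtain s where "s > 0" "s *\<^sub>R z \<in> D" using absorbing unfolding absorbing_def by blast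
  then have "1 / s \<in> scales z" by simp
  then show ?thesis by blast
qed

private lemma scales_upclosed:
  assumes t: "t \<in> scales z" and "t \<le> t'"
  shows "t' \<in> scales z"
  using convex_scaleR_mem[OF convex absorbing_zero[OF absorbing], of "1 / t" z "1 / t'"] assms
  by (simp add: frac_le)

private lemma minkowski_functional_le: "t \<in> scales z \<Longrightarrow> minkowski_functional D z \<le> t"
  unfolding minkowski_functional_def by (rule cInf_lower) (auto intro: bdd_belowI[of _ 0])

private lemma minkowski_functional_greatest:
  "(\<And>t. t \<in> scales z \<Longrightarrow> c \<le> t) \<Longrightarrow> c \<le> minkowski_functional D z"
  unfolding minkowski_functional_def using scales_nonempty by (rule cInf_greatest)

lemma minkowski_functional_le_1: "z \<in> D \<Longrightarrow> minkowski_functional D z \<le> 1"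
  by (rule minkowski_functional_le) simp

lemma one_le_minkowski_functional:
  assumes "z \<notin> D"
  shows "1 \<le> minkowski_functional D z"
proof (rule minkowski_functional_greatest, rule ccontr)
  fix t assume "t \<in> scales z" "\<not> 1 \<le> t"
  then have "1 \<in> scales z" using scales_upclosed[of t z 1] by simp
  then show False using assms by simp
qed

lemma sublinear_minkowski_functional: "sublinear (minkowski_functional D)"
  unfolding sublinear_def
proof (intro conjI allI impI)
  fix x y
  have sum: "s + t \<in> scales (x + y)" if s: "s \<in> scales x" and t: "t \<in> scales y" for s t
  proof -
    have "s > 0" "t > 0" using s t by auto
    have "(s / (s + t)) *\<^sub>R ((1 / s) *\<^sub>R x) + (t / (s + t)) *\<^sub>R ((1 / t) *\<^sub>R y) \<in> D"
      using convexD[OF convex, of "(1 / s) *\<^sub>R x" "(1 / t) *\<^sub>R y" "s / (s + t)" "t / (s + t)"] s t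
      by (simp add: add_divide_distrib[symmetric])
    then show ?thesis using \<open>s > 0\<close> \<open>t > 0\<close> by (simp add: scaleR_add_right)
  qed
  have "minkowski_functional D (x + y) - t \<le> minkowski_functional D x" if "t \<in> scales y" for t
    using minkowski_functional_le[OF sum[OF _ that]]
    by (intro minkowski_functional_greatest) force
  then have "minkowski_functional D (x + y) - minkowski_functional D x \<le> minkowski_functional D y"
    by (intro minkowski_functional_greatest) force
  then show "minkowski_functional D (x + y) \<le> minkowski_functional D x + minkowski_functional D y"
    by simp
next
  fix c :: real and z assume c: "c > 0"
  have "minkowski_functional D (c *\<^sub>R z) / c \<le> minkowski_functional D z"
  proof (rule minkowski_functional_greatest)
    fix t assume "t \<in> scales z"
    then have "c * t \<in> scales (c *\<^sub>R z)" using c by simp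
    then show "minkowski_functional D (c *\<^sub>R z) / c \<le> t"
      using minkowski_functional_le c by (simp add: field_simps)
  qed
  then show "minkowski_functional D (c *\<^sub>R z) \<le> c * minkowski_functional D z"
    using c by (simp add: field_simps)
qed

end

theorem separation_absorbing:
  fixes C V :: "'v::real_vector set"
  assumes C: "convex C" "a \<in> C" and V: "convex V" "absorbing V"
    and disjoint: "\<And>c v. c \<in> C \<Longrightarrow> v \<in> V \<Longrightarrow> c + v \<noteq> p"
  shows "\<exists>g \<delta>::real. linear g \<and> \<delta> > 0 \<and> (\<forall>v\<in>V. g v \<le> 1) \<and> (\<forall>c\<in>C. g c + \<delta> \<le> g p)"
proof -
  define D where "D = (\<lambda>c. c - a) ` C + V"
  have D_mem: "c - a + v \<in> D" if "c \<in> C" "v \<in> V" for c v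
    unfolding D_def using that by blast
  have "V \<subseteq> D" using D_mem[OF C(2)] by auto
  have "convex D" unfolding D_def using C(1) V(1) by (intro convex_set_plus) auto
  moreover have "absorbing D" using absorbing_mono[OF V(2) \<open>V \<subseteq> D\<close>] .
  moreover have "p - a \<notin> D"
    unfolding D_def using disjoint by (force elim!: set_plus_elim)
  ultimately obtain g where g: "linear g" "g \<le> minkowski_functional D" "1 \<le> g (p - a)"
    using Hahn_Banach_sublinear[OF sublinear_minkowski_functional one_le_minkowski_functional]
    by blast
  have g_le_1: "g z \<le> 1" if "z \<in> D" for z
    using g(2) minkowski_functional_le_1[OF \<open>convex D\<close> \<open>absorbing D\<close> that] by (auto simp: le_fun_def intro: order_trans)
  obtain \<delta> where \<delta>: "\<delta> > 0" "\<delta> *\<^sub>R (p - a) \<in> V" using V(2) unfolding absorbing_def by blast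
  have "g c + \<delta> \<le> g p" if "c \<in> C" for c
  proof -
    have "g (c - a) + \<delta> * g (p - a) \<le> 1"
      using g_le_1[OF D_mem[OF that \<delta>(2)]] g(1) by (simp add: linear_add linear_scale)
    moreover have "\<delta> \<le> \<delta> * g (p - a)" using mult_left_mono[OF g(3)] \<delta>(1) by simp
    ultimately show ?thesis using g(3) \<delta>(1) g(1) by (simp add: linear_diff)
  qed
  moreover have "\<forall>v\<in>V. g v \<le> 1" using g_le_1 \<open>V \<subseteq> D\<close> by blast
  ultimately show ?thesis using g(1) \<delta>(1) by blast
qed

section \<open>Locally convex spaces\<close>

lemma topdual_linear: "\<psi> \<in> topdual \<Longrightarrow> linear \<psi>"
  unfolding topdual_def by auto

lemma topdual_zero: "(\<lambda>x. 0) \<in> topdual"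
  unfolding topdual_def by (auto intro: linearI)

lemma topdual_add: "\<psi>1 \<in> topdual \<Longrightarrow> \<psi>2 \<in> topdual \<Longrightarrow> (\<lambda>x. \<psi>1 x + \<psi>2 x) \<in> topdual"
  unfolding topdual_def by (auto intro: linear_compose_add continuous_on_add)

lemma topdual_mult: "\<psi> \<in> topdual \<Longrightarrow> (\<lambda>x. c * \<psi> x) \<in> topdual"
  unfolding topdual_def
  by (auto intro!: linearI continuous_intros simp: linear_add linear_scale algebra_simps)

lemma topdual_diff:
  assumes "\<psi>1 \<in> topdual" "\<psi>2 \<in> topdual"
  shows "(\<lambda>x. \<psi>1 x - \<psi>2 x) \<in> topdual"
  using topdual_add[OF assms(1) topdual_mult[OF assms(2), of "- 1"]] by simp

lemma locally_convex_tvs_continuous_affine: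
  assumes "locally_convex_tvs TYPE('a::{real_vector,topological_space})"
  shows "continuous_on UNIV (\<lambda>x::'a. a + c *\<^sub>R x)"
proof -
  have add: "continuous_on UNIV (\<lambda>p::'a \<times> 'a. fst p + snd p)"
    and scale: "continuous_on UNIV (\<lambda>p::real \<times> 'a. fst p *\<^sub>R snd p)"
    using assms unfolding locally_convex_tvs_def by blast+
  have "continuous_on UNIV (\<lambda>x::'a. c *\<^sub>R x)"
    using continuous_on_compose2[OF scale continuous_on_Pair[OF continuous_on_const continuous_on_id]]
    by simp
  then show ?thesis
    using continuous_on_compose2[OF add continuous_on_Pair[OF continuous_on_const]] by simp
qed

lemma locally_convex_tvs_open_vimage_affine:
  assumes "locally_convex_tvs TYPE('a::{real_vector,topological_space})" "open U"
  shows "open ((\<lambda>x::'a. a + c *\<^sub>R x) -` U)"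
  using locally_convex_tvs_continuous_affine[OF assms(1)] assms(2)
  by (simp add: continuous_on_open_vimage)

lemma locally_convex_tvs_eventually_scaleR:
  assumes "locally_convex_tvs TYPE('a::{real_vector,topological_space})" "open U" "0 \<in> U"
  shows "\<forall>\<^sub>F t in nhds 0. t *\<^sub>R (x::'a) \<in> U"
proof -
  have "continuous_on UNIV (\<lambda>t::real. t *\<^sub>R x)"
    using assms(1) continuous_on_compose2[OF _ continuous_on_Pair[OF continuous_on_id continuous_on_const],
        of UNIV "\<lambda>p::real \<times> 'a. fst p *\<^sub>R snd p"]
    unfolding locally_convex_tvs_def by simp
  then obtain A where "open A" "0 \<in> A" "\<forall>t\<in>A. t *\<^sub>R x \<in> U"
    using assms(2,3) unfolding continuous_on_topological by (metis UNIV_I scaleR_zero_left)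
  then show ?thesis unfolding eventually_nhds by blast
qed

lemma locally_convex_tvs_continuous_linear:
  fixes \<psi> :: "'a::{real_vector,topological_space} \<Rightarrow> real"
  assumes lc: "locally_convex_tvs TYPE('a)" and \<psi>: "linear \<psi>"
    and U: "open U" "0 \<in> U" "\<forall>x\<in>U. \<psi> x \<le> 1"
  shows "continuous_on UNIV \<psi>"
  unfolding continuous_on_topological
proof (intro ballI allI impI)
  fix z B assume "open B" "\<psi> z \<in> B"
  then obtain e where e: "e > 0" "ball (\<psi> z) e \<subseteq> B" using open_contains_ball by blast
  define N where "N = U \<inter> (\<lambda>x. 0 + (-1) *\<^sub>R x) -` U"
  have N_bound: "\<bar>\<psi> n\<bar> \<le> 1" if "n \<in> N" for n
  proof -
    have "\<psi> n \<le> 1" "\<psi> (- n) \<le> 1" using that U(3) unfolding N_def by auto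
    then show ?thesis using linear_neg[OF \<psi>, of n] by (simp add: abs_le_iff)
  qed
  define A where "A = (\<lambda>w. (- (2 / e)) *\<^sub>R z + (2 / e) *\<^sub>R w) -` N"
  have "open A" unfolding A_def N_def
    using U(1) by (intro locally_convex_tvs_open_vimage_affine[OF lc] open_Int) auto
  moreover have "z \<in> A" using U(2) unfolding A_def N_def by simp
  moreover have "\<psi> w \<in> B" if "w \<in> A" for w
  proof -
    have "\<psi> ((- (2 / e)) *\<^sub>R z + (2 / e) *\<^sub>R w) = (2 / e) * (\<psi> w - \<psi> z)"
      by (simp only: linear_add[OF \<psi>] linear_scale[OF \<psi>]) (simp add: algebra_simps diff_divide_distrib)
    then have "\<psi> w - \<psi> z = (e / 2) * \<psi> ((- (2 / e)) *\<^sub>R z + (2 / e) *\<^sub>R w)"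
      using e(1) by simp
    also have "\<bar>\<dots>\<bar> \<le> e / 2"
      using N_bound that e(1) unfolding A_def by (simp add: abs_mult)
    finally have "\<psi> w \<in> ball (\<psi> z) e" using e(1) by (simp add: dist_real_def abs_minus_commute)
    then show ?thesis using e(2) by blast
  qed
  ultimately show "\<exists>A. open A \<and> z \<in> A \<and> (\<forall>w\<in>UNIV. w \<in> A \<longrightarrow> \<psi> w \<in> B)" by blast
qed

lemma locally_convex_tvs_convex_nhd:
  assumes "locally_convex_tvs TYPE('a::{real_vector,topological_space})" "open (U::'a set)" "0 \<in> U"
  obtains V where "open V" "convex V" "0 \<in> V" "V \<subseteq> U"
proof -
  from assms(1) have "\<forall>U::'a set. open U \<and> 0 \<in> U \<longrightarrow> (\<exists>V. open V \<and> convex V \<and> 0 \<in> V \<and> V \<subseteq> U)"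
    unfolding locally_convex_tvs_def by (elim conjE)
  then show ?thesis using assms(2,3) that by blast
qed

lemma locally_convex_tvs_absorbing:
  assumes "locally_convex_tvs TYPE('a::{real_vector,topological_space})" "open U" "0 \<in> U"
  shows "absorbing (U::'a set)"
  unfolding absorbing_def
proof
  fix x :: 'a
  obtain d where "d > 0" "\<forall>t. dist t 0 < d \<longrightarrow> t *\<^sub>R x \<in> U"
    using locally_convex_tvs_eventually_scaleR[OF assms] unfolding eventually_nhds_metric by blast
  then show "\<exists>s>0. s *\<^sub>R x \<in> U" by (intro exI[of _ "d / 2"]) auto
qed

lemma topdual_separates_points:
  fixes u :: "'a::{real_vector,t1_space}"
  assumes lc: "locally_convex_tvs TYPE('a)" and "u \<noteq> 0"
  shows "\<exists>k\<in>topdual. 0 < k u"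
proof -
  have "open (- {u})" "0 \<in> - {u}" using \<open>u \<noteq> 0\<close> by auto
  then obtain V where V: "open V" "convex V" "0 \<in> V" "V \<subseteq> - {u}"
    by (rule locally_convex_tvs_convex_nhd[OF lc])
  have disjoint: "c + v \<noteq> u" if "c \<in> {0}" "v \<in> V" for c v using that V(4) by auto
  obtain g :: "'a \<Rightarrow> real" and \<delta> where g: "linear g" "\<delta> > 0" "\<forall>v\<in>V. g v \<le> 1" "g 0 + \<delta> \<le> g u"
    using separation_absorbing[where a = 0, OF convex_singleton singletonI V(2) locally_convex_tvs_absorbing[OF lc V(1,3)]
        disjoint] by auto
  have "g \<in> topdual"
    unfolding topdual_def using locally_convex_tvs_continuous_linear[OF lc g(1) V(1,3)] g(1,3) by simp
  moreover have "0 < g u" using g(2,4) linear_0[OF g(1)] by simp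
  ultimately show ?thesis by blast
qed

section \<open>Continuous affine minorants\<close>

lemma Gamma_not_MInfty: "f \<in> GammaX \<Longrightarrow> f x \<noteq> -\<infinity>"
  unfolding GammaX_def by auto

lemma Gamma_finite_somewhere:
  assumes "f \<in> GammaX"
  obtains x0 r0 where "f x0 = ereal r0"
proof -
  obtain x0 where "f x0 \<noteq> \<infinity>" "f x0 \<noteq> -\<infinity>" using assms unfolding GammaX_def by auto
  then show ?thesis using that by (cases "f x0") auto
qed

lemma convex_epigraph_Gamma:
  assumes "f \<in> GammaX"
  shows "convex {(x, r). f x \<le> ereal r}"
proof (rule convexI, clarsimp)
  fix x1 r1 x2 r2 and u w :: real
  assume h: "f x1 \<le> ereal r1" "f x2 \<le> ereal r2" and uw: "0 \<le> u" "0 \<le> w" "u + w = 1"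
  have "f ((1 - w) *\<^sub>R x1 + w *\<^sub>R x2) \<le> ereal (1 - w) * f x1 + ereal w * f x2"
    using assms uw unfolding GammaX_def by simp
  then have "f (u *\<^sub>R x1 + w *\<^sub>R x2) \<le> ereal u * f x1 + ereal w * f x2"
    using uw(3) by (simp add: eq_diff_eq[symmetric])
  also have "\<dots> \<le> ereal u * ereal r1 + ereal w * ereal r2"
    using uw h by (intro add_mono ereal_mult_left_mono) auto
  finally show "f (u *\<^sub>R x1 + w *\<^sub>R x2) \<le> ereal (u * r1 + w * r2)" by simp
qed

lemma linear_Pair_real:
  fixes G :: "'a::real_vector \<times> real \<Rightarrow> real"
  assumes "linear G"
  shows "G (x, r) = G (x, 0) + G (0, 1) * r" "linear (\<lambda>x. G (x, 0))"
proof -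
  show "G (x, r) = G (x, 0) + G (0, 1) * r"
    using linear_add[OF assms, of "(x, 0)" "r *\<^sub>R (0, 1)"] linear_scale[OF assms, of r "(0, 1)"]
    by (simp add: mult.commute)
  have "linear (\<lambda>x::'a. (x, 0::real))" by (rule linearI) simp_all
  from linear_compose[OF this assms] show "linear (\<lambda>x. G (x, 0))" unfolding o_def .
qed

lemma Gamma_epigraph_separation:
  fixes f :: "'a::{real_vector,topological_space} \<Rightarrow> ereal"
  assumes lc: "locally_convex_tvs TYPE('a)" and f: "f \<in> GammaX" and y: "ereal \<alpha> < f y"
  shows "\<exists>\<psi>\<in>topdual. \<exists>\<beta> \<delta>. \<delta> > 0 \<and> (\<forall>x r. f x \<le> ereal r \<longrightarrow> \<psi> x + \<beta> * r + \<delta> \<le> \<psi> y + \<beta> * \<alpha>)"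
proof -
  obtain \<alpha>' where "ereal \<alpha> < ereal \<alpha>'" "ereal \<alpha>' < f y" using ereal_dense2[OF y] by blast
  then obtain \<epsilon> where \<epsilon>: "\<epsilon> > 0" "ereal (\<alpha> + \<epsilon>) < f y" by (intro that[of "\<alpha>' - \<alpha>"]) auto
  define W where "W = (\<lambda>v. y + (-1) *\<^sub>R v) -` (- {x. f x \<le> ereal (\<alpha> + \<epsilon>)})"
  have "open W" unfolding W_def
    using f unfolding GammaX_def by (intro locally_convex_tvs_open_vimage_affine[OF lc]) auto
  moreover have "0 \<in> W" unfolding W_def using \<epsilon>(2) by simp
  ultimately obtain V where V: "open V" "convex V" "0 \<in> V" "V \<subseteq> W"
    using locally_convex_tvs_convex_nhd[OF lc] by blast
  define E where "E = {(x, r). f x \<le> ereal r}"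
  obtain x0 r0 where "f x0 = ereal r0" using Gamma_finite_somewhere[OF f] .
  then have "(x0, r0) \<in> E" unfolding E_def by simp
  have absorbing: "absorbing (V \<times> ball (0::real) \<epsilon>)"
    using absorbing_Times[OF V(2) locally_convex_tvs_absorbing[OF lc V(1,3)] convex_ball absorbing_ball[OF \<epsilon>(1)]] .
  have disjoint: "e + v \<noteq> (y, \<alpha>)" if eE: "e \<in> E" and vV: "v \<in> V \<times> ball 0 \<epsilon>" for e v
  proof
    obtain x r where e: "e = (x, r)" "f x \<le> ereal r" using eE unfolding E_def by auto
    obtain v1 s where v: "v = (v1, s)" "v1 \<in> V" "\<bar>s\<bar> < \<epsilon>" using vV by (auto simp: dist_real_def)
    assume "e + v = (y, \<alpha>)"
    then have "x = y + (-1) *\<^sub>R v1" "r \<le> \<alpha> + \<epsilon>" using e(1) v(1,3) by (auto simp: algebra_simps)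
    then have "f (y + (-1) *\<^sub>R v1) \<le> ereal (\<alpha> + \<epsilon>)" using e(2) order_trans by fastforce
    then show False using v(2) V(4) unfolding W_def by auto
  qed
  obtain G :: "'a \<times> real \<Rightarrow> real" and \<delta>
    where G: "linear G" "\<delta> > 0" "\<forall>v\<in>V \<times> ball 0 \<epsilon>. G v \<le> 1" "\<forall>e\<in>E. G e + \<delta> \<le> G (y, \<alpha>)"
    using separation_absorbing[OF convex_epigraph_Gamma[OF f, folded E_def] \<open>(x0, r0) \<in> E\<close>
        convex_Times[OF V(2) convex_ball] absorbing disjoint] by auto
  define \<psi> where "\<psi> x = G (x, 0)" for x
  have G_Pair: "G (x, r) = \<psi> x + G (0, 1) * r" for x r
    unfolding \<psi>_def by (rule linear_Pair_real(1)[OF G(1)])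
  have "linear \<psi>" unfolding \<psi>_def by (rule linear_Pair_real(2)[OF G(1)])
  moreover have "\<forall>x\<in>V. \<psi> x \<le> 1" using G(3) \<epsilon>(1) unfolding \<psi>_def by force
  ultimately have "\<psi> \<in> topdual"
    unfolding topdual_def using locally_convex_tvs_continuous_linear[OF lc _ V(1,3)] by blast
  moreover have "\<psi> x + G (0, 1) * r + \<delta> \<le> \<psi> y + G (0, 1) * \<alpha>" if "f x \<le> ereal r" for x r
  proof -
    have "G (x, r) + \<delta> \<le> G (y, \<alpha>)" using G(4) that unfolding E_def by blast
    then show ?thesis using G_Pair[of x r] G_Pair[of y \<alpha>] by linarith
  qed
  ultimately show ?thesis using G(2) by (intro bexI[of _ \<psi>] exI[of _ "G (0, 1)"] exI[of _ \<delta>]) auto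
qed

lemma affine_minorant_of_nonvertical_separation:
  assumes \<psi>: "\<psi> \<in> topdual" and \<beta>: "\<beta> < 0" and f: "f \<in> GammaX"
    and sep: "\<And>x r. f x \<le> ereal r \<Longrightarrow> \<psi> x + \<beta> * r \<le> \<psi> y + \<beta> * \<alpha>"
  shows "\<exists>\<phi>\<in>topdual. \<exists>c. (\<forall>x. ereal (\<phi> x + c) \<le> f x) \<and> \<alpha> \<le> \<phi> y + c"
proof -
  define \<phi> where "\<phi> x = (- 1 / \<beta>) * \<psi> x" for x
  have "ereal (\<phi> x + (\<alpha> - \<phi> y)) \<le> f x" for x
  proof (cases "f x")
    case (real r)
    then have "\<psi> x - \<psi> y \<le> (- \<beta>) * (r - \<alpha>)" using sep[of x r] by (simp add: algebra_simps)
    then have "(- 1 / \<beta>) * (\<psi> x - \<psi> y) \<le> (- 1 / \<beta>) * ((- \<beta>) * (r - \<alpha>))"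
      using \<beta> by (intro mult_left_mono) auto
    also have "\<dots> = r - \<alpha>" using \<beta> by simp
    finally show ?thesis using real unfolding \<phi>_def by (simp add: algebra_simps)
  qed (use Gamma_not_MInfty[OF f] in auto)
  moreover have "\<phi> \<in> topdual" unfolding \<phi>_def using topdual_mult[OF \<psi>] .
  ultimately show ?thesis by (intro bexI[of _ \<phi>] exI[of _ "\<alpha> - \<phi> y"]) auto
qed

lemma Gamma_affine_minorant:
  fixes f :: "'a::{real_vector,topological_space} \<Rightarrow> ereal"
  assumes lc: "locally_convex_tvs TYPE('a)" and f: "f \<in> GammaX"
  obtains \<phi> c where "\<phi> \<in> topdual" "\<And>x. ereal (\<phi> x + c) \<le> f x"
proof -
  obtain x0 r0 where x0: "f x0 = ereal r0" using Gamma_finite_somewhere[OF f] .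
  then have "ereal (r0 - 1) < f x0" by simp
  then obtain \<psi> \<beta> \<delta> where \<psi>: "\<psi> \<in> topdual" "\<delta> > 0"
      and sep: "\<And>x r. f x \<le> ereal r \<Longrightarrow> \<psi> x + \<beta> * r + \<delta> \<le> \<psi> x0 + \<beta> * (r0 - 1)"
    using Gamma_epigraph_separation[OF lc f] by blast
  have \<beta>: "\<beta> < 0" using sep[of x0 r0] x0 \<psi>(2) by (simp add: algebra_simps)
  have "\<psi> x + \<beta> * r \<le> \<psi> x0 + \<beta> * (r0 - 1)" if "f x \<le> ereal r" for x r
    using sep[OF that] \<psi>(2) by linarith
  from affine_minorant_of_nonvertical_separation[OF \<psi>(1) \<beta> f this]
  show ?thesis using that by blast
qed

text \<open>Tilt an arbitrary affine minorant by a large multiple of the vertical hyperplane \<open>\<psi>\<close>.\<close>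
lemma affine_minorant_of_vertical_separation:
  assumes \<psi>: "\<psi> \<in> topdual" "\<delta> > 0" and f: "f \<in> GammaX"
    and sep: "\<And>x r. f x \<le> ereal r \<Longrightarrow> \<psi> x + \<delta> \<le> \<psi> y"
    and \<phi>1: "\<phi>1 \<in> topdual" "\<And>x. ereal (\<phi>1 x + c1) \<le> f x"
  shows "\<exists>\<phi>\<in>topdual. \<exists>c. (\<forall>x. ereal (\<phi> x + c) \<le> f x) \<and> \<alpha> \<le> \<phi> y + c"
proof -
  define L where "L = max 0 ((\<alpha> - \<phi>1 y - c1) / \<delta>)"
  have "0 \<le> L" "(\<alpha> - \<phi>1 y - c1) / \<delta> \<le> L" unfolding L_def by simp_all
  then have L: "0 \<le> L" "\<alpha> - \<phi>1 y - c1 \<le> L * \<delta>"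
    using \<psi>(2) by (simp_all add: pos_divide_le_eq)
  define \<phi> where "\<phi> x = \<phi>1 x + L * \<psi> x" for x
  define c where "c = c1 + L * (\<delta> - \<psi> y)"
  have "ereal (\<phi> x + c) \<le> f x" for x
  proof (cases "f x")
    case (real r)
    then have "L * (\<psi> x + \<delta> - \<psi> y) \<le> 0"
      using sep[of x r] L(1) by (simp add: mult_nonneg_nonpos)
    moreover have "\<phi>1 x + c1 \<le> r" using \<phi>1(2)[of x] real by simp
    ultimately show ?thesis using real unfolding \<phi>_def c_def by (simp add: algebra_simps)
  qed (use Gamma_not_MInfty[OF f] in auto)
  moreover have "\<phi> \<in> topdual" unfolding \<phi>_def by (intro topdual_add topdual_mult \<phi>1(1) \<psi>(1))
  moreover have "\<alpha> \<le> \<phi> y + c" using L(2) unfolding \<phi>_def c_def by (simp add: algebra_simps)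
  ultimately show ?thesis by blast
qed

theorem Gamma_affine_minorant_at:
  fixes f :: "'a::{real_vector,topological_space} \<Rightarrow> ereal"
  assumes lc: "locally_convex_tvs TYPE('a)" and f: "f \<in> GammaX" and y: "ereal \<alpha> < f y"
  shows "\<exists>\<phi>\<in>topdual. \<exists>c. (\<forall>x. ereal (\<phi> x + c) \<le> f x) \<and> \<alpha> \<le> \<phi> y + c"
proof -
  obtain \<psi> \<beta> \<delta> where \<psi>: "\<psi> \<in> topdual" "\<delta> > 0"
      and sep: "\<And>x r. f x \<le> ereal r \<Longrightarrow> \<psi> x + \<beta> * r + \<delta> \<le> \<psi> y + \<beta> * \<alpha>"
    using Gamma_epigraph_separation[OF lc f y] by blast
  obtain x0 r0 where x0: "f x0 = ereal r0" using Gamma_finite_somewhere[OF f] .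
  have "\<beta> \<le> 0"
  proof (rule ccontr)
    assume "\<not> \<beta> \<le> 0"
    define r where "r = max r0 ((\<psi> y + \<beta> * \<alpha> - \<psi> x0) / \<beta>)"
    have "(\<psi> y + \<beta> * \<alpha> - \<psi> x0) / \<beta> \<le> r" unfolding r_def by simp
    then have "\<psi> y + \<beta> * \<alpha> - \<psi> x0 \<le> \<beta> * r"
      using \<open>\<not> \<beta> \<le> 0\<close> by (simp add: pos_divide_le_eq mult.commute)
    moreover have "f x0 \<le> ereal r" using x0 unfolding r_def by simp
    ultimately show False using sep \<psi>(2) by force
  qed
  show ?thesis
  proof (cases "\<beta> = 0")
    case False
    then have "\<beta> < 0" using \<open>\<beta> \<le> 0\<close> by simp
    have "\<psi> x + \<beta> * r \<le> \<psi> y + \<beta> * \<alpha>" if "f x \<le> ereal r" for x r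
      using sep[OF that] \<psi>(2) by linarith
    then show ?thesis using affine_minorant_of_nonvertical_separation[OF \<psi>(1) \<open>\<beta> < 0\<close> f] by blast
  next
    case True
    obtain \<phi>1 c1 where \<phi>1: "\<phi>1 \<in> topdual" "\<And>x. ereal (\<phi>1 x + c1) \<le> f x"
      using Gamma_affine_minorant[OF lc f] by blast
    have vertical: "\<psi> x + \<delta> \<le> \<psi> y" if "f x \<le> ereal r" for x r
      using sep[OF that] True by simp
    show ?thesis by (rule affine_minorant_of_vertical_separation[OF \<psi> f vertical \<phi>1])
  qed
qed

lemma dom_conj_iff: "\<psi> \<in> dom_conj f \<longleftrightarrow> \<psi> \<in> topdual \<and> (\<exists>c. \<forall>x. ereal (\<psi> x + c) \<le> f x)"
proof
  assume \<psi>: "\<psi> \<in> dom_conj f"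
  then obtain k where k: "fconj f \<psi> \<le> ereal k"
    unfolding dom_conj_def by (cases "fconj f \<psi>") auto
  have "ereal (\<psi> x - k) \<le> f x" for x
  proof -
    have "ereal (\<psi> x) - f x \<le> ereal k"
      using k unfolding fconj_def by (meson SUP_upper UNIV_I order_trans)
    then show ?thesis by (cases "f x") auto
  qed
  then show "\<psi> \<in> topdual \<and> (\<exists>c. \<forall>x. ereal (\<psi> x + c) \<le> f x)"
    using \<psi> unfolding dom_conj_def by (intro conjI exI[of _ "- k"]) auto
next
  assume "\<psi> \<in> topdual \<and> (\<exists>c. \<forall>x. ereal (\<psi> x + c) \<le> f x)"
  then obtain c where "\<psi> \<in> topdual" "\<And>x. ereal (\<psi> x + c) \<le> f x" by blast
  moreover have "fconj f \<psi> \<le> ereal (- c)"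
    unfolding fconj_def
  proof (rule SUP_least)
    fix x
    show "ereal (\<psi> x) - f x \<le> ereal (- c)" using \<open>ereal (\<psi> x + c) \<le> f x\<close> by (cases "f x") auto
  qed
  ultimately show "\<psi> \<in> dom_conj f" unfolding dom_conj_def by auto
qed

section \<open>Weak* closures and quasi-interiors\<close>

text \<open>Pointwise, so that the separation theorem above applies to sets of functionals.\<close>
instantiation "fun" :: (type, real_vector) real_vector
begin

definition scaleR_fun :: "real \<Rightarrow> ('a \<Rightarrow> 'b) \<Rightarrow> 'a \<Rightarrow> 'b" where
  "scaleR_fun c f = (\<lambda>x. c *\<^sub>R f x)"

instance
  by standard (simp_all add: scaleR_fun_def fun_eq_iff scaleR_add_right scaleR_add_left)

end

lemma scaleR_fun_apply [simp]: "(c *\<^sub>R f) x = c *\<^sub>R f x"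
  by (simp add: scaleR_fun_def)

lemma sum_fun_apply: "(sum g F) y = (\<Sum>x\<in>F. g x y)"
  by (induction F rule: infinite_finite_induct) auto

lemma linear_evaluation: "linear (\<lambda>b::'a \<Rightarrow> 'b::real_vector. b x)"
  by (rule linearI) simp_all

lemma linear_bounded_on_box_representation:
  fixes G :: "('a \<Rightarrow> real) \<Rightarrow> real"
  assumes G: "linear G" and "finite F" "e > 0"
    and bounded: "\<And>b. (\<forall>x\<in>F. \<bar>b x\<bar> < e) \<Longrightarrow> G b \<le> 1"
  shows "G b = (\<Sum>x\<in>F. b x * G (\<lambda>y. if y = x then 1 else 0))"
proof -
  have vanish: "G h = 0" if "\<forall>x\<in>F. h x = 0" for h
  proof (rule ccontr)
    assume "G h \<noteq> 0"
    have "G ((2 / G h) *\<^sub>R h) \<le> 1" using that \<open>e > 0\<close> by (intro bounded) simp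
    then show False using \<open>G h \<noteq> 0\<close> by (simp add: linear_scale[OF G])
  qed
  define b' where "b' = (\<Sum>x\<in>F. b x *\<^sub>R (\<lambda>y. if y = x then 1 else (0::real)))"
  have "b' y = b y" if "y \<in> F" for y
  proof -
    have "b' y = (\<Sum>x\<in>F. if y = x then b x else 0)"
      unfolding b'_def sum_fun_apply by (intro sum.cong) auto
    then show ?thesis using \<open>finite F\<close> that by simp
  qed
  then have "G (b - b') = 0" by (intro vanish) simp
  then have "G b = G b'" by (simp add: linear_diff[OF G])
  also have "\<dots> = (\<Sum>x\<in>F. b x * G (\<lambda>y. if y = x then 1 else 0))"
    unfolding b'_def by (simp add: linear_sum[OF G] linear_scale[OF G])
  finally show ?thesis .
qed

lemma absorbing_box:
  assumes "finite F" "e > 0"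
  shows "absorbing {b :: 'a \<Rightarrow> real. \<forall>x\<in>F. \<bar>b x\<bar> < e}"
  unfolding absorbing_def
proof
  fix z :: "'a \<Rightarrow> real"
  define S where "S = (\<Sum>x\<in>F. \<bar>z x\<bar>)"
  have S_bound: "\<bar>z x\<bar> \<le> S" if "x \<in> F" for x
    unfolding S_def using assms(1) that by (intro member_le_sum) auto
  have pos: "e / (S + 1) > 0" using assms(2) by (simp add: S_def sum_nonneg add_nonneg_pos)
  have "\<bar>(e / (S + 1)) * z x\<bar> < e" if "x \<in> F" for x
  proof -
    have "(e / (S + 1)) * \<bar>z x\<bar> < (e / (S + 1)) * (S + 1)"
      using S_bound[OF that] pos by (intro mult_strict_left_mono) auto
    moreover have "\<bar>(e / (S + 1)) * z x\<bar> = (e / (S + 1)) * \<bar>z x\<bar>"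
      using pos by (simp only: abs_mult abs_of_pos)
    moreover have "S + 1 \<noteq> 0" using pos assms(2) by auto
    ultimately show ?thesis by simp
  qed
  then show "\<exists>s>0. s *\<^sub>R z \<in> {b. \<forall>x\<in>F. \<bar>b x\<bar> < e}" using pos by auto
qed

lemma convex_box: "convex {b :: 'a \<Rightarrow> real. \<forall>x\<in>F. \<bar>b x\<bar> < e}"
proof -
  have "{b :: 'a \<Rightarrow> real. \<forall>x\<in>F. \<bar>b x\<bar> < e} = (\<Inter>x\<in>F. (\<lambda>b. b x) -` ball 0 e)"
    by (auto simp: dist_real_def)
  then show ?thesis
    by (simp add: convex_INT convex_linear_vimage[OF linear_evaluation convex_ball])
qed

theorem weak_star_nbhd_separation:
  fixes A :: "('a::real_vector \<Rightarrow> real) set"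
  assumes A: "convex A" "a0 \<in> A" "\<And>a. a \<in> A \<Longrightarrow> linear a" and k: "linear k"
    and F: "finite F" and e: "e > 0" and far: "\<And>a. a \<in> A \<Longrightarrow> \<exists>x\<in>F. e \<le> \<bar>a x - k x\<bar>"
  shows "\<exists>u. \<forall>a\<in>A. a u < k u"
proof -
  define V where "V = {b :: 'a \<Rightarrow> real. \<forall>x\<in>F. \<bar>b x\<bar> < e}"
  have disjoint: "a + v \<noteq> k" if "a \<in> A" "v \<in> V" for a v
    using far[OF that(1)] that(2) unfolding V_def by force
  obtain G :: "('a \<Rightarrow> real) \<Rightarrow> real" and \<delta>
    where G: "linear G" "\<delta> > 0" "\<forall>v\<in>V. G v \<le> 1" "\<forall>a\<in>A. G a + \<delta> \<le> G k"
    using separation_absorbing[OF A(1,2) convex_box[of F e, folded V_def] absorbing_box[OF F e, folded V_def] disjoint]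
    unfolding V_def by auto
  define u where "u = (\<Sum>x\<in>F. G (\<lambda>y. if y = x then 1 else 0) *\<^sub>R x)"
  have G_eval: "G b = b u" if "linear b" for b
    using linear_bounded_on_box_representation[OF G(1) F e, of b] G(3) unfolding V_def u_def
    by (simp add: linear_sum[OF that] linear_scale[OF that] mult.commute)
  show ?thesis using G(2,4) G_eval A(3) k by (intro exI[of _ u]) force
qed

lemma wstar_closure_subset_topdual: "wstar_closure B \<subseteq> topdual"
  unfolding wstar_closure_def by auto

lemma wstar_closure_mono: "B \<subseteq> B' \<Longrightarrow> wstar_closure B \<subseteq> wstar_closure B'"
  unfolding wstar_closure_def by blast

lemma subset_wstar_closure: "B \<subseteq> topdual \<Longrightarrow> B \<subseteq> wstar_closure B"
  unfolding wstar_closure_def by force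

lemma wstar_closure_approx:
  assumes "\<phi> \<in> wstar_closure B" "e > 0"
  obtains b where "b \<in> B" "\<bar>b u - \<phi> u\<bar> < e"
proof -
  have "finite {u}" by simp
  then have "\<exists>b\<in>B. \<forall>x\<in>{u}. \<bar>b x - \<phi> x\<bar> < e" using assms unfolding wstar_closure_def by blast
  then show ?thesis using that by auto
qed

lemma in_wstar_closureI:
  assumes A: "convex A" "A \<subseteq> topdual" and k: "k \<in> topdual"
    and not_below: "\<And>u. \<exists>a\<in>A. k u \<le> a u"
  shows "k \<in> wstar_closure A"
  unfolding wstar_closure_def
proof (intro CollectI conjI k allI impI)
  fix F :: "'a set" and e :: real assume Fe: "finite F \<and> e > 0"
  show "\<exists>a\<in>A. \<forall>x\<in>F. \<bar>a x - k x\<bar> < e"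
  proof (rule ccontr)
    assume "\<not> ?thesis"
    then have far: "\<exists>x\<in>F. e \<le> \<bar>a x - k x\<bar>" if "a \<in> A" for a using that by (auto simp: not_less)
    obtain a0 where "a0 \<in> A" using not_below by blast
    have "linear a" if "a \<in> A" for a using that A(2) topdual_linear by blast
    then obtain u where "\<forall>a\<in>A. a u < k u"
      using weak_star_nbhd_separation[OF A(1) \<open>a0 \<in> A\<close> _ topdual_linear[OF k] _ _ far] Fe by blast
    then show False using not_below[of u] by force
  qed
qed

lemma wstar_closure_cone_hull:
  fixes B :: "('a::{real_vector,topological_space} \<Rightarrow> real) set"
  assumes B: "convex B" "B \<subseteq> topdual" "B \<noteq> {}" and \<phi>: "\<phi> \<in> topdual"
    and above: "\<And>u. u \<noteq> 0 \<Longrightarrow> \<exists>b\<in>B. \<phi> u < b u"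
  shows "wstar_closure (cone hull ((\<lambda>b. b - \<phi>) ` B)) = topdual"
proof -
  define K where "K = cone hull ((\<lambda>b. b - \<phi>) ` B)"
  have K_expl: "K = {t *\<^sub>R (b - \<phi>) | t b. t \<ge> 0 \<and> b \<in> B}"
    unfolding K_def cone_hull_expl by blast
  have "convex K" unfolding K_def using B(1) by (intro convex_cone_hull convex_translation_subtract)
  moreover have "t *\<^sub>R (b - \<phi>) \<in> topdual" if "b \<in> B" for t b
  proof -
    have "t *\<^sub>R (b - \<phi>) = (\<lambda>x. t * (b x - \<phi> x))" by (simp add: fun_eq_iff)
    then show ?thesis using that B(2) \<phi> by (auto intro!: topdual_mult topdual_diff)
  qed
  then have "K \<subseteq> topdual" unfolding K_expl by blast
  moreover have "\<exists>a\<in>K. k u \<le> a u" if "k \<in> topdual" for k u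
  proof (cases "k u \<le> 0")
    case True
    have "0 *\<^sub>R (b - \<phi>) \<in> K" if "b \<in> B" for b unfolding K_expl using that by blast
    then show ?thesis using True B(3) by fastforce
  next
    case False
    then have "u \<noteq> 0" using linear_0[OF topdual_linear[OF that]] by auto
    then obtain b where b: "b \<in> B" "\<phi> u < b u" using above by blast
    define t where "t = k u / (b u - \<phi> u)"
    have "t \<ge> 0" "t * (b u - \<phi> u) = k u" using False b(2) unfolding t_def by auto
    moreover have "t *\<^sub>R (b - \<phi>) \<in> K" unfolding K_expl using \<open>t \<ge> 0\<close> b(1) by blast
    ultimately show ?thesis by (intro bexI[of _ "t *\<^sub>R (b - \<phi>)"]) auto
  qed
  ultimately have "topdual \<subseteq> wstar_closure K" using in_wstar_closureI by blast
  then show ?thesis unfolding K_def using wstar_closure_subset_topdual by blast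
qed

lemma qi_wstar_closureI:
  fixes B :: "('a::{real_vector,topological_space} \<Rightarrow> real) set"
  assumes B: "convex B" "B \<subseteq> topdual" and \<phi>: "\<phi> \<in> topdual" and nontrivial: "\<exists>x::'a. x \<noteq> 0"
    and above: "\<And>u. u \<noteq> 0 \<Longrightarrow> \<exists>b\<in>B. \<phi> u < b u"
  shows "\<phi> \<in> qi (wstar_closure B)"
proof -
  have "B \<noteq> {}" using nontrivial above by blast
  have closure: "\<phi> \<in> wstar_closure B"
  proof (rule in_wstar_closureI[OF B \<phi>])
    fix u
    show "\<exists>b\<in>B. \<phi> u \<le> b u"
    proof (cases "u = 0")
      case True
      obtain b where "b \<in> B" using \<open>B \<noteq> {}\<close> by blast
      then have "b u = \<phi> u"
        using True B(2) \<phi> by (auto simp: linear_0[OF topdual_linear])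
      then show ?thesis using \<open>b \<in> B\<close> by (intro bexI[of _ b]) simp_all
    next
      case False
      then obtain b where "b \<in> B" "\<phi> u < b u" using above by blast
      then show ?thesis by (intro bexI[of _ b]) auto
    qed
  qed
  have cone_subset: "cone hull ((\<lambda>b. b - \<phi>) ` B)
      \<subseteq> {(\<lambda>x. t * (c x - \<phi> x)) | t c. t \<ge> 0 \<and> c \<in> wstar_closure B}"
  proof -
    have "t *\<^sub>R (b - \<phi>) = (\<lambda>x. t * (b x - \<phi> x))" for t b by (simp add: fun_eq_iff)
    then show ?thesis unfolding cone_hull_expl using subset_wstar_closure[OF B(2)] by blast
  qed
  have "wstar_closure (cone hull ((\<lambda>b. b - \<phi>) ` B)) = topdual"
    using wstar_closure_cone_hull[OF B \<open>B \<noteq> {}\<close> \<phi>] above by blast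
  then have "wstar_closure {(\<lambda>x. t * (c x - \<phi> x)) | t c. t \<ge> 0 \<and> c \<in> wstar_closure B} = topdual"
    using wstar_closure_mono[OF cone_subset] wstar_closure_subset_topdual by blast
  then show ?thesis unfolding qi_def using closure by blast
qed

lemma qi_wstar_closureD:
  assumes "\<phi> \<in> qi (wstar_closure B)" and k: "k \<in> topdual" "0 < k u"
  shows "\<exists>b\<in>B. \<phi> u < b u"
proof -
  have "k \<in> wstar_closure {(\<lambda>x. t * (c x - \<phi> x)) | t c. t \<ge> 0 \<and> c \<in> wstar_closure B}"
    using assms(1) k(1) unfolding qi_def by blast
  then obtain a where a: "a \<in> {(\<lambda>x. t * (c x - \<phi> x)) | t c. t \<ge> 0 \<and> c \<in> wstar_closure B}"
    "\<bar>a u - k u\<bar> < k u"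
    by (rule wstar_closure_approx[OF _ k(2)])
  then obtain t c where tc: "t \<ge> 0" "c \<in> wstar_closure B" "\<bar>t * (c u - \<phi> u) - k u\<bar> < k u"
    by blast
  then have "t * (c u - \<phi> u) > 0" by linarith
  then have "c u - \<phi> u > 0" using tc(1) by (simp add: zero_less_mult_iff)
  then obtain b where "b \<in> B" "\<bar>b u - c u\<bar> < c u - \<phi> u"
    using wstar_closure_approx[OF tc(2)] by blast
  then show ?thesis by (intro bexI[of _ b]) auto
qed

theorem qi_wstar_closure_iff:
  fixes B :: "('a::{real_vector,topological_space} \<Rightarrow> real) set"
  assumes "convex B" "B \<subseteq> topdual" "\<phi> \<in> topdual" "\<exists>x::'a. x \<noteq> 0"
    and separating: "\<And>u::'a. u \<noteq> 0 \<Longrightarrow> \<exists>k\<in>topdual. 0 < k u"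
  shows "\<phi> \<in> qi (wstar_closure B) \<longleftrightarrow> (\<forall>u. u \<noteq> 0 \<longrightarrow> (\<exists>b\<in>B. \<phi> u < b u))"
proof
  assume q: "\<phi> \<in> qi (wstar_closure B)"
  show "\<forall>u. u \<noteq> 0 \<longrightarrow> (\<exists>b\<in>B. \<phi> u < b u)"
  proof (intro allI impI)
    fix u :: 'a assume "u \<noteq> 0"
    then obtain k where "k \<in> topdual" "0 < k u" using separating[of u] by blast
    then show "\<exists>b\<in>B. \<phi> u < b u" by (rule qi_wstar_closureD[OF q])
  qed
next
  assume "\<forall>u. u \<noteq> 0 \<longrightarrow> (\<exists>b\<in>B. \<phi> u < b u)"
  then show "\<phi> \<in> qi (wstar_closure B)" using qi_wstar_closureI[OF assms(1-4)] by blast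
qed

section \<open>Directional coercivity\<close>

lemma convex_dom_conj: "convex (dom_conj f)"
proof (rule convexI)
  fix \<psi>1 \<psi>2 and u w :: real
  assume "\<psi>1 \<in> dom_conj f" "\<psi>2 \<in> dom_conj f" and uw: "0 \<le> u" "0 \<le> w" "u + w = 1"
  then obtain c1 c2 where \<psi>: "\<psi>1 \<in> topdual" "\<psi>2 \<in> topdual"
    and c: "\<And>x. ereal (\<psi>1 x + c1) \<le> f x" "\<And>x. ereal (\<psi>2 x + c2) \<le> f x"
    unfolding dom_conj_iff by blast
  have "ereal ((u *\<^sub>R \<psi>1 + w *\<^sub>R \<psi>2) x + (u * c1 + w * c2)) \<le> f x" for x
  proof (cases "f x")
    case (real r)
    have "u * (\<psi>1 x + c1) + w * (\<psi>2 x + c2) \<le> u * r + w * r"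
      using c[of x] uw real by (intro add_mono mult_left_mono) auto
    also have "\<dots> = r" using uw(3) by (simp flip: distrib_right)
    finally show ?thesis using real by (simp add: algebra_simps)
  qed (use c(1)[of x] in auto)
  moreover have "u *\<^sub>R \<psi>1 + w *\<^sub>R \<psi>2 \<in> topdual"
    using topdual_add[OF topdual_mult[OF \<psi>(1)] topdual_mult[OF \<psi>(2)]] by (simp add: plus_fun_def)
  ultimately show "u *\<^sub>R \<psi>1 + w *\<^sub>R \<psi>2 \<in> dom_conj f" unfolding dom_conj_iff by blast
qed

lemma dom_conj_subset_topdual: "dom_conj f \<subseteq> topdual"
  unfolding dom_conj_def by auto

lemma tendsto_PInfty_along_ray:
  assumes "\<psi> \<in> dom_conj f" "\<phi> \<in> topdual" "\<phi> u < \<psi> u"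
  shows "((\<lambda>t. f (x + t *\<^sub>R u) - ereal (\<phi> (x + t *\<^sub>R u))) \<longlongrightarrow> \<infinity>) at_top"
proof -
  obtain c where \<psi>: "\<psi> \<in> topdual" "\<And>x. ereal (\<psi> x + c) \<le> f x" using assms(1) unfolding dom_conj_iff by blast
  define A where "A = \<psi> x + c - \<phi> x"
  define B where "B = \<psi> u - \<phi> u"
  have "B > 0" using assms(3) unfolding B_def by simp
  have lower: "ereal (A + t * B) \<le> f (x + t *\<^sub>R u) - ereal (\<phi> (x + t *\<^sub>R u))" for t
  proof -
    have "\<psi> (x + t *\<^sub>R u) + c - \<phi> (x + t *\<^sub>R u) = A + t * B"
      using topdual_linear[OF \<psi>(1)] topdual_linear[OF assms(2)] unfolding A_def B_def
      by (simp add: linear_add linear_scale algebra_simps)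
    then show ?thesis using \<psi>(2)[of "x + t *\<^sub>R u"] by (cases "f (x + t *\<^sub>R u)") auto
  qed
  show ?thesis
    unfolding tendsto_PInfty eventually_at_top_linorder
  proof
    fix r :: real
    have "ereal r < f (x + t *\<^sub>R u) - ereal (\<phi> (x + t *\<^sub>R u))" if "t \<ge> (r - A) / B + 1" for t
    proof -
      have "r - A + B \<le> t * B" using that \<open>B > 0\<close> by (simp add: field_simps)
      then have "ereal r < ereal (A + t * B)" using \<open>B > 0\<close> by simp
      then show ?thesis using lower[of t] by (rule less_le_trans)
    qed
    then show "\<exists>N. \<forall>t\<ge>N. ereal r < f (x + t *\<^sub>R u) - ereal (\<phi> (x + t *\<^sub>R u))" by blast
  qed
qed

lemma dom_conj_above_if_dir_coercive:
  fixes f :: "'a::{real_vector,topological_space} \<Rightarrow> ereal"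
  assumes lc: "locally_convex_tvs TYPE('a)" and f: "f \<in> GammaX" and \<phi>: "\<phi> \<in> topdual"
    and coercive: "dir_coercive (\<lambda>x. f x - ereal (\<phi> x))" and "u \<noteq> 0"
  shows "\<exists>\<psi>\<in>dom_conj f. \<phi> u < \<psi> u"
proof (rule ccontr)
  assume "\<not> ?thesis"
  then have below: "\<psi> u \<le> \<phi> u" if "\<psi> \<in> dom_conj f" for \<psi> using that by force
  obtain x0 r0 where x0: "f x0 = ereal r0" using Gamma_finite_somewhere[OF f] .
  have "((\<lambda>t. f (x0 + t *\<^sub>R u) - ereal (\<phi> (x0 + t *\<^sub>R u))) \<longlongrightarrow> \<infinity>) at_top"
    using coercive \<open>u \<noteq> 0\<close> unfolding dir_coercive_def by blast
  then obtain N where N: "\<And>t. t \<ge> N \<Longrightarrow> ereal (r0 - \<phi> x0 + 1) < f (x0 + t *\<^sub>R u) - ereal (\<phi> (x0 + t *\<^sub>R u))"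
    unfolding tendsto_PInfty eventually_at_top_linorder by blast
  define t where "t = max N 0"
  define y where "y = x0 + t *\<^sub>R u"
  have \<phi>_y: "\<phi> y = \<phi> x0 + t * \<phi> u"
    unfolding y_def using topdual_linear[OF \<phi>] by (simp add: linear_add linear_scale)
  have "ereal (r0 - \<phi> x0 + 1) < f y - ereal (\<phi> y)" using N[of t] unfolding t_def y_def by simp
  then have "ereal (r0 + t * \<phi> u + 1) < f y" unfolding \<phi>_y by (cases "f y") auto
  then obtain \<psi> c where \<psi>: "\<psi> \<in> topdual" "\<forall>x. ereal (\<psi> x + c) \<le> f x" "r0 + t * \<phi> u + 1 \<le> \<psi> y + c"
    using Gamma_affine_minorant_at[OF lc f] by blast
  then have "\<psi> u \<le> \<phi> u" using below unfolding dom_conj_iff by blast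
  moreover have "\<psi> x0 + c \<le> r0" using \<psi>(2) x0 by (metis ereal_less_eq(3))
  moreover have "\<psi> y = \<psi> x0 + t * \<psi> u"
    unfolding y_def using topdual_linear[OF \<psi>(1)] by (simp add: linear_add linear_scale)
  moreover have "t \<ge> 0" unfolding t_def by simp
  ultimately show False using \<psi>(3) mult_left_mono[of "\<psi> u" "\<phi> u" t] by linarith
qed

theorem dir_coercive_iff_dom_conj:
  fixes f :: "'a::{real_vector,topological_space} \<Rightarrow> ereal"
  assumes lc: "locally_convex_tvs TYPE('a)" and f: "f \<in> GammaX" and \<phi>: "\<phi> \<in> topdual"
  shows "dir_coercive (\<lambda>x. f x - ereal (\<phi> x)) \<longleftrightarrow> (\<forall>u. u \<noteq> 0 \<longrightarrow> (\<exists>\<psi>\<in>dom_conj f. \<phi> u < \<psi> u))"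
  using dom_conj_above_if_dir_coercive[OF lc f \<phi>] tendsto_PInfty_along_ray[OF _ \<phi>]
  unfolding dir_coercive_def by blast

theorem corollary11:
  fixes f :: "'a::{real_vector,t2_space} \<Rightarrow> ereal"
  assumes "locally_convex_tvs TYPE('a)"
    and "\<exists>x::'a. x \<noteq> 0"
    and "f \<in> GammaX"
  shows "(dir_coercive f \<longleftrightarrow> (\<lambda>x::'a. 0::real) \<in> qi (wstar_closure (dom_conj f)))
       \<and> (ess_dir_coercive f \<longleftrightarrow> qi (wstar_closure (dom_conj f)) \<noteq> {})"
proof -
  have separating: "\<exists>k\<in>topdual. 0 < k u" if "u \<noteq> 0" for u :: 'a
    using topdual_separates_points[OF assms(1) that] .
  have main: "dir_coercive (\<lambda>x. f x - ereal (\<phi> x)) \<longleftrightarrow> \<phi> \<in> qi (wstar_closure (dom_conj f))"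
    if "\<phi> \<in> topdual" for \<phi>
    using dir_coercive_iff_dom_conj[OF assms(1,3) that]
      qi_wstar_closure_iff[OF convex_dom_conj dom_conj_subset_topdual that assms(2) separating] by simp
  have "qi (wstar_closure (dom_conj f)) \<subseteq> topdual"
    unfolding qi_def using wstar_closure_subset_topdual by blast
  then show ?thesis
    using main[OF topdual_zero] unfolding ess_dir_coercive_def by (auto simp: main)
qed

end
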